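(* Let $\alpha=(\alpha_1,\ldots,\alpha_n)$ be a composition, $\sigma\in S_n$, and $i\in\{1,\ldots,n-1\}$ with $\alpha_i=\alpha_{i+1}$. Let $T\in\mathrm{NAF}(\alpha,\sigma)$ and $U\in\mathrm{F}(\alpha,\sigma s_i)$. If $P_i(T,U)\ne0$, then $U$ is non-attacking, i.e. $U\in\mathrm{NAF}(\alpha,\sigma s_i)$.
   Context: Permutations are in one-line notation; $\sigma s_i$ is $\sigma$ with the entries in positions $i,i+1$ exchanged. A composition is a sequence of nonnegative integers. The skyline diagram is $\mathrm{dg}(\alpha)=\{(j,r):1\le j\le n,\ 1\le r\le\alpha_j\}$ ($j$ = column, $r$ = row) and the augmented diagram is $\mathrm{adg}(\alpha)=\mathrm{dg}(\alpha)\cup\{(j,0):1\le j\le n\}$ (row $0$ is the basement). For $u=(j,r)\in\mathrm{dg}(\alpha)$: $\mathrm{leg}(u)=\alpha_j-r$; the left arm set is $\{(j',r-1)\in\mathrm{adg}(\alpha):j'<j,\ \alpha_{j'}<\alpha_j\}$, the right arm set is $\{(j',r)\in\mathrm{dg}(\alpha):j'>j,\ \alpha_{j'}\le\alpha_j\}$, $\mathrm{Arm}(u)$ is their union and $\mathrm{arm}(u)=|\mathrm{Arm}(u)|$. Two boxes of $\mathrm{adg}(\alpha)$ attack each other if they are in the same row, or in consecutive rows with the box in the higher row strictly to the right of the box in the lower row. A filling of shape $\alpha$ and basement $\tau\in S_n$ is a map $T:\mathrm{adg}(\alpha)\to\{1,\ldots,n\}$ with $T(j,0)=\tau_j$; $\mathrm{F}(\alpha,\tau)$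 is the set of these, and $\mathrm{NAF}(\alpha,\tau)$ the subset of non-attacking ones (attacking boxes have distinct entries). For integers $a,b$ let $\chi(a,b)=1$ if $a>b$ and $0$ otherwise, and $\chi(a,b,c)=\chi(a,b)+\chi(b,c)-\chi(a,c)$. Fix $i$ with $\alpha_i=\alpha_{i+1}$. For a filling $T$ and $0\le r\le\alpha_i$, $\mathrm{swap}_r(T)$ exchanges the entries of boxes $(i,r)$ and $(i+1,r)$, and $\Omega_{0,h}=\mathrm{swap}_h\circ\cdots\circ\mathrm{swap}_0$. For $T\in\mathrm{NAF}(\alpha,\tau)$ and $0\le r\le\alpha_i-1$, let $a=T(i,r)$, $b=T(i+1,r)$, $c=T(i,r+1)$, $d=T(i+1,r+1)$, $A=\mathrm{arm}(i+1,r+1)$, $\ell=\mathrm{leg}(i+1,r+1)$, and define $\rho_r(T)\in\mathbb{Q}(q,t)$: if $a,b,c,d$ are distinct, $\rho_r(T)=0$ when $\chi(c,d,a)=\chi(c,d,b)$ and $\rho_r(T)=1$ when $\chi(c,d,a)=\chi(d,c,b)$; if exactly three of them are distinct, then $\rho_r(T)=0$ if $b=c$, $\rho_r(T)=1$ if $b=d$, and $\rho_r(T)=t^{1-\chi(d,a,b)}\frac{1-q^{\ell+1}t^{A+1}}{1-q^{\ell+1}t^{A+2}}$ if $a=c$; if $a=c$ and $b=d$, $\rho_r(T)=1$. Also set $\rho_{\alpha_i}(T)=0$. For $T\in\mathrm{NAF}(\alpha,\tau)$ and $U\in\mathrm{F}(\alpha,\tau s_i)$, $P_i(T,U)=\left(\prod_{r=0}^{h-1}\rho_r(T)\right)(1-\rho_h(T))$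 if $U=\Omega_{0,h}(T)$ for some $h\in\{0,\ldots,\alpha_i\}$, and $P_i(T,U)=0$ otherwise. *)

theory Defs
  imports "HOL-Computational_Algebra.Polynomial" "HOL-Computational_Algebra.Fraction_Field"
begin

text \<open>Conventions: a composition is a list alpha of naturals, n = length alpha,
  columns are 1-indexed, alpha_j = alpha ! (j-1).  A permutation in one-line
  notation is a list sigma with distinct entries and set sigma = {1..n},
  sigma_j = sigma ! (j-1).  Boxes are pairs (column, row).\<close>

definition ht :: "nat list \<Rightarrow> nat \<Rightarrow> nat" where
  "ht \<alpha> j = \<alpha> ! (j - 1)"

definition ent :: "nat list \<Rightarrow> nat \<Rightarrow> nat" where
  "ent \<sigma> j = \<sigma> ! (j - 1)"

definition is_perm :: "nat \<Rightarrow> nat list \<Rightarrow> bool" where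
  "is_perm n \<sigma> \<longleftrightarrow> length \<sigma> = n \<and> distinct \<sigma> \<and> set \<sigma> = {1..n}"

definition perm_si :: "nat list \<Rightarrow> nat \<Rightarrow> nat list" where
  "perm_si \<sigma> i = \<sigma>[i - 1 := \<sigma> ! i, i := \<sigma> ! (i - 1)]"

definition dg :: "nat list \<Rightarrow> (nat \<times> nat) set" where
  "dg \<alpha> = {(j, r). 1 \<le> j \<and> j \<le> length \<alpha> \<and> 1 \<le> r \<and> r \<le> ht \<alpha> j}"

definition adg :: "nat list \<Rightarrow> (nat \<times> nat) set" where
  "adg \<alpha> = dg \<alpha> \<union> {(j, 0) | j. 1 \<le> j \<and> j \<le> length \<alpha>}"

definition leg :: "nat list \<Rightarrow> nat \<times> nat \<Rightarrow> nat" where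
  "leg \<alpha> u = ht \<alpha> (fst u) - snd u"

definition Arm :: "nat list \<Rightarrow> nat \<times> nat \<Rightarrow> (nat \<times> nat) set" where
  "Arm \<alpha> u =
     {(j', r'). (j', r') \<in> adg \<alpha> \<and> r' = snd u - 1 \<and> j' < fst u \<and> ht \<alpha> j' < ht \<alpha> (fst u)}
   \<union> {(j', r'). (j', r') \<in> dg \<alpha> \<and> r' = snd u \<and> j' > fst u \<and> ht \<alpha> j' \<le> ht \<alpha> (fst u)}"

definition arm :: "nat list \<Rightarrow> nat \<times> nat \<Rightarrow> nat" where
  "arm \<alpha> u = card (Arm \<alpha> u)"

definition attack :: "nat \<times> nat \<Rightarrow> nat \<times> nat \<Rightarrow> bool" where
  "attack u v \<longleftrightarrow> u \<noteq> v \<and>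
     (snd u = snd v
      \<or> (snd v = snd u + 1 \<and> fst v > fst u)
      \<or> (snd u = snd v + 1 \<and> fst u > fst v))"

definition fillings :: "nat list \<Rightarrow> nat list \<Rightarrow> (nat \<times> nat \<Rightarrow> nat) set" where
  "fillings \<alpha> \<tau> = {T. (\<forall>x\<in>adg \<alpha>. T x \<in> {1..length \<alpha>})
                       \<and> (\<forall>x. x \<notin> adg \<alpha> \<longrightarrow> T x = 0)
                       \<and> (\<forall>j. 1 \<le> j \<and> j \<le> length \<alpha> \<longrightarrow> T (j, 0) = ent \<tau> j)}"

definition NAF :: "nat list \<Rightarrow> nat list \<Rightarrow> (nat \<times> nat \<Rightarrow> nat) set" where
  "NAF \<alpha> \<tau> = {T \<in> fillings \<alpha> \<tau>.
      \<forall>u\<in>adg \<alpha>. \<forall>v\<in>adg \<alpha>. attack u v \<longrightarrow> T u \<noteq> T v}"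

definition chi :: "nat \<Rightarrow> nat \<Rightarrow> int" where
  "chi a b = (if a > b then 1 else 0)"

definition chi3 :: "nat \<Rightarrow> nat \<Rightarrow> nat \<Rightarrow> int" where
  "chi3 a b c = chi a b + chi b c - chi a c"

definition swap_row :: "nat \<Rightarrow> nat \<Rightarrow> (nat \<times> nat \<Rightarrow> nat) \<Rightarrow> (nat \<times> nat \<Rightarrow> nat)" where
  "swap_row i r T = T((i, r) := T (i + 1, r), (i + 1, r) := T (i, r))"

primrec Omega :: "nat \<Rightarrow> nat \<Rightarrow> (nat \<times> nat \<Rightarrow> nat) \<Rightarrow> (nat \<times> nat \<Rightarrow> nat)" where
  "Omega i 0 T = swap_row i 0 T"
| "Omega i (Suc h) T = swap_row i (Suc h) (Omega i h T)"

text \<open>The field Q(q,t), realised as the fraction field of Q[t][q].\<close>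
type_synonym qt = "rat poly poly fract"

definition qv :: qt where "qv = Fract [:0, 1:] 1"
definition tv :: qt where "tv = Fract [:[:0, 1:]:] 1"

definition rho :: "nat list \<Rightarrow> nat \<Rightarrow> (nat \<times> nat \<Rightarrow> nat) \<Rightarrow> nat \<Rightarrow> qt" where
  "rho \<alpha> i T r =
    (if r = ht \<alpha> i then 0 else
     (let a = T (i, r); b = T (i + 1, r); c = T (i, r + 1); d = T (i + 1, r + 1);
          A = arm \<alpha> (i + 1, r + 1); l = leg \<alpha> (i + 1, r + 1) in
      if card {a, b, c, d} = 4 then
        (if chi3 c d a = chi3 c d b then 0
         else if chi3 c d a = chi3 d c b then 1 else 0)
      else if card {a, b, c, d} = 3 then
        (if b = c then 0
         else if b = d then 1
         else if a = c then
           tv ^ nat (1 - chi3 d a b) * (1 - qv ^ (l + 1) * tv ^ (A + 1))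
             / (1 - qv ^ (l + 1) * tv ^ (A + 2))
         else 0)
      else if a = c \<and> b = d then 1
      else 0))"

definition P_i :: "nat list \<Rightarrow> nat \<Rightarrow> (nat \<times> nat \<Rightarrow> nat) \<Rightarrow> (nat \<times> nat \<Rightarrow> nat) \<Rightarrow> qt" where
  "P_i \<alpha> i T U =
    (if \<exists>h \<le> ht \<alpha> i. U = Omega i h T then
       (let h = (SOME h. h \<le> ht \<alpha> i \<and> U = Omega i h T) in
        (\<Prod>r<h. rho \<alpha> i T r) * (1 - rho \<alpha> i T h))
     else 0)"

end

theory Submission
  imports Defs
begin

text \<open>\<open>P\<^sub>i(T,U) \<noteq> 0\<close> forces \<open>U = \<Omega>\<^bsub>0,h\<^esub>(T)\<close> with \<open>\<rho>\<^sub>r(T) \<noteq> 0\<close> for \<open>r < h\<close> and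
  \<open>\<rho>\<^sub>h(T) \<noteq> 1\<close>. Exchanging columns \<open>i, i+1\<close> in rows \<open>0..h\<close> permutes each row, so no
  two boxes of a row of \<open>U\<close> agree. For a diagonal pair of \<open>U\<close>, the entries come from an
  attacking pair of \<open>T\<close>, except for \<open>(i+1, r+1)\<close> over \<open>(i, r)\<close>: for \<open>r < h\<close> these carry
  \<open>T(i, r+1)\<close> and \<open>T(i+1, r)\<close>, which differ since \<open>\<rho>\<^sub>r(T) \<noteq> 0\<close>; for \<open>r = h\<close> they carry
  \<open>T(i+1, h+1)\<close> and \<open>T(i+1, h)\<close>, which differ since \<open>\<rho>\<^sub>h(T) \<noteq> 1\<close>.\<close>

definition non_attacking :: "nat list \<Rightarrow> (nat \<times> nat \<Rightarrow> nat) \<Rightarrow> bool" where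
  "non_attacking \<alpha> T \<longleftrightarrow> (\<forall>u\<in>adg \<alpha>. \<forall>v\<in>adg \<alpha>. attack u v \<longrightarrow> T u \<noteq> T v)"

lemma NAF_eq: "NAF \<alpha> \<tau> = {T \<in> fillings \<alpha> \<tau>. non_attacking \<alpha> T}"
  by (simp add: NAF_def non_attacking_def)

lemma adg_iff: "(j, r) \<in> adg \<alpha> \<longleftrightarrow> 1 \<le> j \<and> j \<le> length \<alpha> \<and> r \<le> ht \<alpha> j"
  by (auto simp: adg_def dg_def)

lemma non_attacking_row:
  assumes "non_attacking \<alpha> T" "(j, r) \<in> adg \<alpha>" "(j', r) \<in> adg \<alpha>" "j \<noteq> j'"
  shows "T (j, r) \<noteq> T (j', r)"
  using assms by (auto simp: non_attacking_def attack_def)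

lemma non_attacking_diag:
  assumes "non_attacking \<alpha> T" "(j, Suc r) \<in> adg \<alpha>" "(j', r) \<in> adg \<alpha>" "j' < j"
  shows "T (j, Suc r) \<noteq> T (j', r)"
  using assms by (auto simp: non_attacking_def attack_def)

lemma non_attackingI:
  assumes row: "\<And>j j' r. (j, r) \<in> adg \<alpha> \<Longrightarrow> (j', r) \<in> adg \<alpha> \<Longrightarrow> j \<noteq> j' \<Longrightarrow> T (j, r) \<noteq> T (j', r)"
    and diag: "\<And>j j' r. (j, Suc r) \<in> adg \<alpha> \<Longrightarrow> (j', r) \<in> adg \<alpha> \<Longrightarrow> j' < j \<Longrightarrow>
                 T (j, Suc r) \<noteq> T (j', r)"
  shows "non_attacking \<alpha> T"
  unfolding non_attacking_def
proof (intro ballI impI)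
  fix u v assume "u \<in> adg \<alpha>" "v \<in> adg \<alpha>" "attack u v"
  then show "T u \<noteq> T v"
    using row diag by (cases u; cases v) (auto simp: attack_def simp flip: Suc_eq_plus1; metis)
qed

lemma Omega_apply:
  "Omega i h T (j, r) =
     (if r \<le> h \<and> j = i then T (i + 1, r) else if r \<le> h \<and> j = i + 1 then T (i, r) else T (j, r))"
  by (induction h arbitrary: j r) (auto simp: swap_row_def)

lemma rho_eq_0_if_antidiagonal_repeat:
  assumes "r \<noteq> ht \<alpha> i" "T (i, r) \<noteq> T (i + 1, r)" "T (i, r + 1) \<noteq> T (i + 1, r + 1)"
    and "T (i + 1, r) = T (i, r + 1)"
  shows "rho \<alpha> i T r = 0"
  using assms by (auto simp: rho_def Let_def card_insert_if)

lemma rho_eq_1_if_column_repeat: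
  assumes "r \<noteq> ht \<alpha> i" "T (i, r) \<noteq> T (i + 1, r)" "T (i, r + 1) \<noteq> T (i + 1, r + 1)"
    and "T (i + 1, r) = T (i + 1, r + 1)"
  shows "rho \<alpha> i T r = 1"
  using assms by (auto simp: rho_def Let_def card_insert_if)

lemma P_i_nonzeroE:
  assumes "P_i \<alpha> i T U \<noteq> 0"
  obtains h where "h \<le> ht \<alpha> i" "U = Omega i h T"
    "\<And>r. r < h \<Longrightarrow> rho \<alpha> i T r \<noteq> 0" "rho \<alpha> i T h \<noteq> 1"
proof -
  have ex: "\<exists>h. h \<le> ht \<alpha> i \<and> U = Omega i h T"
    using assms by (auto simp: P_i_def split: if_splits)
  define h where "h = (SOME h. h \<le> ht \<alpha> i \<and> U = Omega i h T)"
  have h: "h \<le> ht \<alpha> i" "U = Omega i h T"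
    using someI_ex[OF ex] unfolding h_def by blast+
  have "(\<Prod>r<h. rho \<alpha> i T r) * (1 - rho \<alpha> i T h) \<noteq> 0"
    using assms ex by (simp add: P_i_def Let_def flip: h_def)
  then show thesis
    using that[OF h] by auto
qed

lemma non_attacking_Omega:
  assumes T: "non_attacking \<alpha> T"
    and i: "1 \<le> i" "i + 1 \<le> length \<alpha>" and hts: "ht \<alpha> i = ht \<alpha> (i + 1)"
    and h: "h \<le> ht \<alpha> i"
    and antidiag: "\<And>r. r < h \<Longrightarrow> T (i + 1, r) \<noteq> T (i, r + 1)"
    and column: "h < ht \<alpha> i \<Longrightarrow> T (i + 1, h) \<noteq> T (i + 1, h + 1)"
  shows "non_attacking \<alpha> (Omega i h T)"
proof (rule non_attackingI)
  have swapped_in_adg: "(i, r) \<in> adg \<alpha>" "(i + 1, r) \<in> adg \<alpha>" if "r \<le> ht \<alpha> i" for r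
    using that i hts by (auto simp: adg_iff)
  fix j j' r
  {
    assume "(j, r) \<in> adg \<alpha>" "(j', r) \<in> adg \<alpha>" "j \<noteq> j'"
    then show "Omega i h T (j, r) \<noteq> Omega i h T (j', r)"
      using non_attacking_row[OF T] swapped_in_adg h
      by (auto simp: Omega_apply)
  next
    assume diag: "(j, Suc r) \<in> adg \<alpha>" "(j', r) \<in> adg \<alpha>" "j' < j"
    show "Omega i h T (j, Suc r) \<noteq> Omega i h T (j', r)"
    proof (cases "j = i + 1 \<and> j' = i")
      case True
      consider "r < h" | "r = h" | "h < r" by linarith
      then show ?thesis
        using True diag non_attacking_diag[OF T] antidiag[of r] column
        by cases (auto simp: Omega_apply adg_iff hts)
    next
      case False
      then show ?thesis
        using diag non_attacking_diag[OF T] swapped_in_adg h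
        by (auto simp: Omega_apply)
    qed
  }
qed

theorem proposition3p6:
  fixes \<alpha> \<sigma> :: "nat list" and i :: nat and T U :: "nat \<times> nat \<Rightarrow> nat"
  assumes "is_perm (length \<alpha>) \<sigma>"
    and "1 \<le> i" and "i \<le> length \<alpha> - 1"
    and "ht \<alpha> i = ht \<alpha> (i + 1)"
    and "T \<in> NAF \<alpha> \<sigma>"
    and "U \<in> fillings \<alpha> (perm_si \<sigma> i)"
    and "P_i \<alpha> i T U \<noteq> 0"
  shows "U \<in> NAF \<alpha> (perm_si \<sigma> i)"
proof -
  obtain h where h: "h \<le> ht \<alpha> i" "U = Omega i h T"
    and rho_ne_0: "\<And>r. r < h \<Longrightarrow> rho \<alpha> i T r \<noteq> 0" and rho_ne_1: "rho \<alpha> i T h \<noteq> 1"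
    using P_i_nonzeroE[OF assms(7)] by blast
  have i: "i + 1 \<le> length \<alpha>"
    using assms(2,3) by linarith
  have T: "non_attacking \<alpha> T"
    using assms(5) by (simp add: NAF_eq)
  have rows_distinct: "T (i, r) \<noteq> T (i + 1, r)" if "r \<le> ht \<alpha> i" for r
    using non_attacking_row[OF T] that assms(2,4) i by (simp add: adg_iff)
  have "T (i + 1, r) \<noteq> T (i, r + 1)" if "r < h" for r
    using rho_eq_0_if_antidiagonal_repeat rho_ne_0[OF that]
      rows_distinct[of r] rows_distinct[of "r + 1"] that h(1)
    by fastforce
  moreover have "T (i + 1, h) \<noteq> T (i + 1, h + 1)" if "h < ht \<alpha> i"
    using rho_eq_1_if_column_repeat rho_ne_1 rows_distinct[of h] rows_distinct[of "h + 1"] that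
    by fastforce
  ultimately have "non_attacking \<alpha> U"
    using non_attacking_Omega[OF T assms(2) i assms(4) h(1)] h(2) by blast
  with assms(6) show ?thesis
    by (simp add: NAF_eq)
qed

end
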